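(* Assume Assumption A. Let $\mathbb B^s=\{(\eta,\xi):\eta\ne\xi,\ (\eta,\xi)\in\mathbb B\text{ or }(\xi,\eta)\in\mathbb B\}$ and $c^s_N(\eta,\xi)=\tfrac12\{\mu_N(\eta)R_N(\eta,\xi)+\mu_N(\xi)R_N(\xi,\eta)\}$. Then the family of sequences $(c^s_N(\eta,\xi))_{N\ge1}$, $(\eta,\xi)\in\mathbb B^s$, is ordered.
   Context: Setting: $E$ is a fixed finite set; for each $N\ge1$, $(\eta^N_t)$ is a continuous-time irreducible Markov chain on $E$ with jump rates $R_N(\eta,\xi)$ and unique invariant probability measure $\mu_N$. Ordered families: a finite family of sequences of positive reals $(a^r_N)_{N\ge1}$, $r\in\mathfrak R$, is ordered if for all $r\neq s$ the sequence $\arctan(a^r_N/a^s_N)$ converges as $N\to\infty$. Assumption A: (i) for each $\eta\neq\xi$, either $R_N(\eta,\xi)=0$ for all $N$ or $R_N(\eta,\xi)>0$ for all $N$; let $\mathbb B=\{(\eta,\xi):\eta\ne\xi,R_N(\eta,\xi)>0\}$. (ii) For every $m\ge1$ the family $\prod_{(\eta,\xi)\in\mathbb B}R_N(\eta,\xi)^{k(\eta,\xi)}$, indexed by $k:\mathbb B\to\mathbb Z_+$ with $\sum k=m$, is ordered. *)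

theory Defs
  imports "HOL-Analysis.Analysis"
begin

definition ordered_family :: "'i set \<Rightarrow> ('i \<Rightarrow> nat \<Rightarrow> real) \<Rightarrow> bool" where
  "ordered_family I a \<longleftrightarrow> finite I \<and>
     (\<forall>r\<in>I. \<forall>N\<ge>1. a r N > 0) \<and>
     (\<forall>r\<in>I. \<forall>s\<in>I. r \<noteq> s \<longrightarrow> convergent (\<lambda>N. arctan (a r N / a s N)))"

definition rate_matrix :: "('a::finite \<Rightarrow> 'a \<Rightarrow> real) \<Rightarrow> bool" where
  "rate_matrix R \<longleftrightarrow> (\<forall>x y. x \<noteq> y \<longrightarrow> R x y \<ge> 0)"

definition irreducible_chain :: "('a::finite \<Rightarrow> 'a \<Rightarrow> real) \<Rightarrow> bool" where
  "irreducible_chain R \<longleftrightarrow> (\<forall>x y. (x, y) \<in> {(u, v). u \<noteq> v \<and> R u v > 0}\<^sup>*)"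

text \<open>Invariant probability measure: \<mu> L = 0, i.e. total inflow equals total outflow.\<close>
definition invariant_prob :: "('a::finite \<Rightarrow> 'a \<Rightarrow> real) \<Rightarrow> ('a \<Rightarrow> real) \<Rightarrow> bool" where
  "invariant_prob R \<mu> \<longleftrightarrow> (\<forall>x. \<mu> x \<ge> 0) \<and> (\<Sum>x\<in>UNIV. \<mu> x) = 1 \<and>
     (\<forall>y. (\<Sum>x\<in>UNIV - {y}. \<mu> x * R x y) = \<mu> y * (\<Sum>z\<in>UNIV - {y}. R y z))"

text \<open>The set \<bbbB> of allowed jumps (determined by N = 1 under Assumption A(i)).\<close>
definition jumps :: "(nat \<Rightarrow> 'a \<Rightarrow> 'a \<Rightarrow> real) \<Rightarrow> ('a \<times> 'a) set" where
  "jumps R = {(x, y). x \<noteq> y \<and> R 1 x y > 0}"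

definition assumption_A :: "(nat \<Rightarrow> 'a::finite \<Rightarrow> 'a \<Rightarrow> real) \<Rightarrow> bool" where
  "assumption_A R \<longleftrightarrow>
     (\<forall>x y. x \<noteq> y \<longrightarrow> (\<forall>N\<ge>1. R N x y = 0) \<or> (\<forall>N\<ge>1. R N x y > 0)) \<and>
     (\<forall>m::nat\<ge>1. ordered_family
        {k :: 'a \<times> 'a \<Rightarrow> nat. (\<forall>e. e \<notin> jumps R \<longrightarrow> k e = 0) \<and> (\<Sum>e\<in>jumps R. k e) = m}
        (\<lambda>k N. \<Prod>e\<in>jumps R. R N (fst e) (snd e) ^ k e))"

definition sym_jumps :: "(nat \<Rightarrow> 'a \<Rightarrow> 'a \<Rightarrow> real) \<Rightarrow> ('a \<times> 'a) set" where
  "sym_jumps R = {(x, y). x \<noteq> y \<and> ((x, y) \<in> jumps R \<or> (y, x) \<in> jumps R)}"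

definition sym_cond :: "(nat \<Rightarrow> 'a \<Rightarrow> 'a \<Rightarrow> real) \<Rightarrow> (nat \<Rightarrow> 'a \<Rightarrow> real) \<Rightarrow> nat \<Rightarrow> 'a \<Rightarrow> 'a \<Rightarrow> real" where
  "sym_cond R \<mu> N x y = (\<mu> N x * R N x y + \<mu> N y * R N y x) / 2"

end

theory Submission
  imports Defs
begin

text \<open>By the Markov chain tree theorem the invariant measure is proportional to the
  tree weights: \<mu>(x) is the sum, over spanning trees directed towards x, of the products of
  the jump rates along their edges. Hence each numerator \<mu>(\<eta>)R(\<eta>,\<xi>) + \<mu>(\<xi>)R(\<xi>,\<eta>),
  up to the common normalisation, is a nonnegative combination of products of |E| rates,
  i.e. of the monomials which Assumption A orders. Two positive nonnegative combinations of
  an ordered family are comparable: divided by the dominant monomial occurring in either,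
  both converge, to limits that are nonnegative and not both zero, so the arctangent of
  their ratio converges.\<close>

definition reaches :: "('a \<Rightarrow> 'a) \<Rightarrow> 'a \<Rightarrow> 'a \<Rightarrow> bool" where
  "reaches g u v \<longleftrightarrow> (\<exists>k. (g ^^ k) u = v)"

text \<open>A map f with f x = x from which every vertex reaches x encodes a spanning tree
  directed towards x (each v \<noteq> x points to its parent f v). A map without fixed points
  from which every vertex reaches y encodes a spanning unicyclic graph whose cycle passes
  through y.\<close>

definition rooted_trees :: "'a \<Rightarrow> ('a \<Rightarrow> 'a) set" where
  "rooted_trees x = {f. f x = x \<and> (\<forall>v. reaches f v x)}"

definition cycle_maps :: "'a \<Rightarrow> ('a \<Rightarrow> 'a) set" where
  "cycle_maps y = {g. (\<forall>v. g v \<noteq> v) \<and> (\<forall>v. reaches g v y)}"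

lemma reaches_refl: "reaches g u u"
  unfolding reaches_def by (rule exI[of _ 0]) simp

lemma reaches_step: "reaches g (g u) v \<Longrightarrow> reaches g u v"
proof -
  assume "reaches g (g u) v"
  then obtain k where "(g ^^ k) (g u) = v" unfolding reaches_def by blast
  then have "(g ^^ Suc k) u = v" by (simp add: funpow_swap1)
  then show ?thesis unfolding reaches_def by blast
qed

lemma reaches_trans: "reaches g u v \<Longrightarrow> reaches g v w \<Longrightarrow> reaches g u w"
proof -
  assume "reaches g u v" "reaches g v w"
  then obtain k l where "(g ^^ k) u = v" "(g ^^ l) v = w" unfolding reaches_def by blast
  then have "(g ^^ (l + k)) u = w" by (simp add: funpow_add)
  then show ?thesis unfolding reaches_def by blast
qed

lemma reaches_cong_except:
  assumes "\<And>w. w \<noteq> x \<Longrightarrow> g w = f w" and "reaches f u x"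
  shows "reaches g u x"
proof -
  obtain k where "(f ^^ k) u = x" using assms(2) unfolding reaches_def by blast
  then show ?thesis
  proof (induction k arbitrary: u)
    case 0
    then show ?case by (simp add: reaches_refl)
  next
    case (Suc k)
    show ?case
    proof (cases "u = x")
      case False
      have "(f ^^ k) (f u) = x" using Suc.prems by (simp add: funpow_swap1)
      then show ?thesis using Suc.IH assms(1)[OF False] by (simp add: reaches_step)
    qed (simp add: reaches_refl)
  qed
qed

lemma funpow_fixpoint: "f x = x \<Longrightarrow> (f ^^ n) x = x"
  by (induction n) auto

lemma rooted_tree_no_fixpoint:
  assumes "f \<in> rooted_trees x" "v \<noteq> x"
  shows "f v \<noteq> v"
proof
  assume "f v = v"
  moreover obtain k where "(f ^^ k) v = x" using assms(1) unfolding rooted_trees_def reaches_def by blast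
  ultimately show False using funpow_fixpoint[of f v k] assms(2) by simp
qed

lemma rooted_tree_no_return:
  assumes f: "f \<in> rooted_trees x" and "y \<noteq> x" "j > 0"
  shows "(f ^^ j) y \<noteq> y"
proof
  assume ret: "(f ^^ j) y = y"
  obtain k where k: "(f ^^ k) y = x" using f unfolding rooted_trees_def reaches_def by blast
  have "(f ^^ (j * k)) y = y"
    using funpow_fixpoint[of "f ^^ j" y k] ret by (simp add: funpow_mult mult.commute)
  moreover have "(f ^^ (j * k)) y = (f ^^ (j * k - k)) ((f ^^ k) y)"
  proof -
    have "j * k = (j * k - k) + k" using \<open>j > 0\<close> by (cases j) auto
    then show ?thesis by (metis comp_apply funpow_add)
  qed
  moreover have "f x = x" using f unfolding rooted_trees_def by blast
  ultimately show False using k funpow_fixpoint[of f x] \<open>y \<noteq> x\<close> by simp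
qed

lemma rooted_tree_redirect_root:
  assumes f: "f \<in> rooted_trees x" and "z \<noteq> x"
  shows "f(x := z) \<in> cycle_maps x"
  unfolding cycle_maps_def
proof (intro CollectI conjI allI)
  fix v
  show "(f(x := z)) v \<noteq> v"
    using rooted_tree_no_fixpoint[OF f, of v] \<open>z \<noteq> x\<close> by (cases "v = x") auto
  show "reaches (f(x := z)) v x"
    by (rule reaches_cong_except[of x]) (use f in \<open>auto simp: rooted_trees_def\<close>)
qed

lemma cycle_maps_reaches:
  assumes "g \<in> cycle_maps x" and "reaches g x y"
  shows "g \<in> cycle_maps y"
proof -
  have "reaches g v y" for v
    using assms(1) reaches_trans[OF _ assms(2)] unfolding cycle_maps_def by blast
  then show ?thesis using assms(1) unfolding cycle_maps_def by blast
qed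

lemma cycle_map_cut:
  assumes g: "g \<in> cycle_maps y" and "reaches g y x"
  shows "g(x := x) \<in> rooted_trees x"
proof -
  have "reaches (g(x := x)) v x" for v
  proof (rule reaches_cong_except[of x])
    show "reaches g v x" using g reaches_trans[OF _ \<open>reaches g y x\<close>] unfolding cycle_maps_def by blast
  qed simp
  then show ?thesis unfolding rooted_trees_def by simp
qed

definition cycle_length :: "('a \<Rightarrow> 'a) \<Rightarrow> 'a \<Rightarrow> nat" where
  "cycle_length g y = (LEAST p. p > 0 \<and> (g ^^ p) y = y)"

definition cycle_pred :: "('a \<Rightarrow> 'a) \<Rightarrow> 'a \<Rightarrow> 'a" where
  "cycle_pred g y = (g ^^ (cycle_length g y - 1)) y"

lemma cycle_length:
  assumes "g \<in> cycle_maps y"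
  shows "cycle_length g y > 0" "(g ^^ cycle_length g y) y = y"
    and "\<And>j. 0 < j \<Longrightarrow> j < cycle_length g y \<Longrightarrow> (g ^^ j) y \<noteq> y"
proof -
  obtain k where "(g ^^ k) (g y) = y" using assms unfolding cycle_maps_def reaches_def by blast
  then have "Suc k > 0 \<and> (g ^^ Suc k) y = y" by (simp add: funpow_swap1)
  from LeastI[of "\<lambda>p. p > 0 \<and> (g ^^ p) y = y", OF this]
  show "cycle_length g y > 0" "(g ^^ cycle_length g y) y = y"
    unfolding cycle_length_def by auto
  show "\<And>j. 0 < j \<Longrightarrow> j < cycle_length g y \<Longrightarrow> (g ^^ j) y \<noteq> y"
    using not_less_Least[of _ "\<lambda>p. p > 0 \<and> (g ^^ p) y = y"] unfolding cycle_length_def by blast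
qed

lemma cycle_pred:
  assumes g: "g \<in> cycle_maps y"
  shows "g (cycle_pred g y) = y" "cycle_pred g y \<noteq> y" "reaches g y (cycle_pred g y)"
proof -
  note len = cycle_length[OF g]
  have "g (cycle_pred g y) = (g ^^ cycle_length g y) y"
  proof -
    have "cycle_length g y = Suc (cycle_length g y - 1)" using len(1) by simp
    then show ?thesis unfolding cycle_pred_def by (metis comp_apply funpow.simps(2))
  qed
  then show "g (cycle_pred g y) = y" using len(2) by simp
  then show "cycle_pred g y \<noteq> y"
  proof (cases "cycle_length g y = 1")
    case True
    then show ?thesis using g len(2) unfolding cycle_pred_def cycle_maps_def by auto
  next
    case False
    then show ?thesis using len(1) len(3)[of "cycle_length g y - 1"] unfolding cycle_pred_def by simp
  qed
  show "reaches g y (cycle_pred g y)" unfolding cycle_pred_def reaches_def by blast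
qed

text \<open>Redirecting the root x of a tree to y closes a cycle x \<rightarrow> y \<rightarrow> \<dots> \<rightarrow> x,
  so x is recovered as the predecessor of y on that cycle.\<close>

lemma cycle_pred_redirect_root:
  assumes f: "f \<in> rooted_trees x" and "x \<noteq> y"
  shows "cycle_pred (f(x := y)) y = x"
proof -
  define g where "g = f(x := y)"
  have "\<exists>d. (f ^^ d) y = x" using f unfolding rooted_trees_def reaches_def by blast
  define d where "d = (LEAST d. (f ^^ d) y = x)"
  have fd: "(f ^^ d) y = x" unfolding d_def by (rule LeastI_ex) fact
  have before: "(f ^^ j) y \<noteq> x" if "j < d" for j
    using that unfolding d_def by (rule not_less_Least)
  have agree: "(g ^^ j) y = (f ^^ j) y" if "j \<le> d" for j
    using that by (induction j) (auto simp: g_def dest: before[OF Suc_le_lessD])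
  have "reaches g x y" unfolding g_def by (rule reaches_step) (simp add: reaches_refl)
  with rooted_tree_redirect_root[OF f \<open>x \<noteq> y\<close>[symmetric]] have g: "g \<in> cycle_maps y"
    unfolding g_def by (rule cycle_maps_reaches)
  note len = cycle_length[OF g]
  have "(g ^^ Suc d) y = y" using agree[of d] fd by (simp add: g_def)
  then have "cycle_length g y \<le> Suc d" unfolding cycle_length_def by (intro Least_le) simp
  moreover have "\<not> cycle_length g y \<le> d"
  proof
    assume "cycle_length g y \<le> d"
    then have "(f ^^ cycle_length g y) y = y" using agree len(2) by simp
    then show False using len(1) rooted_tree_no_return[OF f \<open>x \<noteq> y\<close>[symmetric]] by blast
  qed
  ultimately have "cycle_length g y = Suc d" by simp
  then show ?thesis unfolding g_def[symmetric] cycle_pred_def using agree[of d] fd by simp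
qed

lemma bij_betw_redirect_root:
  "bij_betw (\<lambda>(x, f). f(x := y)) (SIGMA x:UNIV - {y}. rooted_trees x) (cycle_maps y)"
proof (rule bij_betw_byWitness[where f' = "\<lambda>g. (cycle_pred g y, g(cycle_pred g y := cycle_pred g y))"])
  show "\<forall>p\<in>SIGMA x:UNIV - {y}. rooted_trees x.
      (\<lambda>g. (cycle_pred g y, g(cycle_pred g y := cycle_pred g y))) ((\<lambda>(x, f). f(x := y)) p) = p"
    by (auto simp: cycle_pred_redirect_root rooted_trees_def)
  show "\<forall>g\<in>cycle_maps y. (\<lambda>(x, f). f(x := y)) (cycle_pred g y, g(cycle_pred g y := cycle_pred g y)) = g"
    by (auto simp: cycle_pred(1))
  show "(\<lambda>(x, f). f(x := y)) ` (SIGMA x:UNIV - {y}. rooted_trees x) \<subseteq> cycle_maps y"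
  proof
    fix g assume "g \<in> (\<lambda>(x, f). f(x := y)) ` (SIGMA x:UNIV - {y}. rooted_trees x)"
    then obtain x f where f: "f \<in> rooted_trees x" and "x \<noteq> y" and g: "g = f(x := y)" by auto
    have "reaches g x y" unfolding g by (rule reaches_step) (simp add: reaches_refl)
    with rooted_tree_redirect_root[OF f \<open>x \<noteq> y\<close>[symmetric]] show "g \<in> cycle_maps y"
      unfolding g by (rule cycle_maps_reaches)
  qed
  show "(\<lambda>g. (cycle_pred g y, g(cycle_pred g y := cycle_pred g y))) ` cycle_maps y
      \<subseteq> (SIGMA x:UNIV - {y}. rooted_trees x)"
    using cycle_pred(2) cycle_map_cut[OF _ cycle_pred(3)] by fastforce
qed

lemma bij_betw_root_out_edge:
  "bij_betw (\<lambda>(z, f). f(y := z)) ((UNIV - {y}) \<times> rooted_trees y) (cycle_maps y)"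
proof (rule bij_betw_byWitness[where f' = "\<lambda>g. (g y, g(y := y))"])
  show "\<forall>p\<in>(UNIV - {y}) \<times> rooted_trees y. (\<lambda>g. (g y, g(y := y))) ((\<lambda>(z, f). f(y := z)) p) = p"
    by (auto simp: rooted_trees_def)
  show "\<forall>g\<in>cycle_maps y. (\<lambda>(z, f). f(y := z)) (g y, g(y := y)) = g"
    by auto
  show "(\<lambda>(z, f). f(y := z)) ` ((UNIV - {y}) \<times> rooted_trees y) \<subseteq> cycle_maps y"
    using rooted_tree_redirect_root by fastforce
  show "(\<lambda>g. (g y, g(y := y))) ` cycle_maps y \<subseteq> (UNIV - {y}) \<times> rooted_trees y"
  proof
    fix p assume "p \<in> (\<lambda>g. (g y, g(y := y))) ` cycle_maps y"
    then obtain g where g: "g \<in> cycle_maps y" and p: "p = (g y, g(y := y))" by blast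
    have "g y \<noteq> y" using g unfolding cycle_maps_def by blast
    with cycle_map_cut[OF g reaches_refl] show "p \<in> (UNIV - {y}) \<times> rooted_trees y"
      unfolding p by blast
  qed
qed

definition tree_weight :: "('a::finite \<Rightarrow> 'a \<Rightarrow> real) \<Rightarrow> 'a \<Rightarrow> real" where
  "tree_weight R x = (\<Sum>f\<in>rooted_trees x. \<Prod>v\<in>UNIV - {x}. R v (f v))"

lemma finite_rooted_trees: "finite (rooted_trees (x::'a::finite))"
  by (rule finite_subset[of _ UNIV]) auto

lemma tree_weight_mult:
  fixes R :: "'a::finite \<Rightarrow> 'a \<Rightarrow> real"
  shows "tree_weight R x * R x y = (\<Sum>f\<in>rooted_trees x. \<Prod>v\<in>UNIV. R v ((f(x := y)) v))"
proof -
  have "(\<Prod>v\<in>UNIV. R v ((f(x := y)) v)) = R x y * (\<Prod>v\<in>UNIV - {x}. R v (f v))" for f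
    by (subst prod.remove[of UNIV x]) (auto intro!: prod.cong)
  then show ?thesis unfolding tree_weight_def sum_distrib_right by (simp add: mult.commute)
qed

lemma tree_weight_inflow:
  fixes R :: "'a::finite \<Rightarrow> 'a \<Rightarrow> real"
  shows "(\<Sum>x\<in>UNIV - {y}. tree_weight R x * R x y) = (\<Sum>g\<in>cycle_maps y. \<Prod>v\<in>UNIV. R v (g v))"
proof -
  have "(\<Sum>x\<in>UNIV - {y}. tree_weight R x * R x y)
      = (\<Sum>(x, f)\<in>(SIGMA x:UNIV - {y}. rooted_trees x). \<Prod>v\<in>UNIV. R v ((f(x := y)) v))"
    unfolding tree_weight_mult by (subst sum.Sigma) (auto simp: finite_rooted_trees)
  also have "\<dots> = (\<Sum>g\<in>cycle_maps y. \<Prod>v\<in>UNIV. R v (g v))"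
    using sum.reindex_bij_betw[OF bij_betw_redirect_root, of "\<lambda>g. \<Prod>v\<in>UNIV. R v (g v)"]
    by (simp add: case_prod_beta)
  finally show ?thesis .
qed

lemma tree_weight_outflow:
  fixes R :: "'a::finite \<Rightarrow> 'a \<Rightarrow> real"
  shows "tree_weight R y * (\<Sum>z\<in>UNIV - {y}. R y z) = (\<Sum>g\<in>cycle_maps y. \<Prod>v\<in>UNIV. R v (g v))"
proof -
  have "tree_weight R y * (\<Sum>z\<in>UNIV - {y}. R y z)
      = (\<Sum>(z, f)\<in>(UNIV - {y}) \<times> rooted_trees y. \<Prod>v\<in>UNIV. R v ((f(y := z)) v))"
    unfolding sum_distrib_left tree_weight_mult by (subst sum.Sigma) (auto simp: finite_rooted_trees)
  also have "\<dots> = (\<Sum>g\<in>cycle_maps y. \<Prod>v\<in>UNIV. R v (g v))"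
    using sum.reindex_bij_betw[OF bij_betw_root_out_edge, of "\<lambda>g. \<Prod>v\<in>UNIV. R v (g v)"]
    by (simp add: case_prod_beta)
  finally show ?thesis .
qed

text \<open>The Markov chain tree theorem: both sides weigh the loop-free maps whose cycle
  passes through y.\<close>

lemma tree_weight_balance:
  fixes R :: "'a::finite \<Rightarrow> 'a \<Rightarrow> real"
  shows "(\<Sum>x\<in>UNIV - {y}. tree_weight R x * R x y) = tree_weight R y * (\<Sum>z\<in>UNIV - {y}. R y z)"
  unfolding tree_weight_inflow tree_weight_outflow ..

text \<open>The map sends each v \<noteq> r to the first step of a shortest E-path from v to r.\<close>

lemma rooted_tree_within:
  assumes "\<And>v. (v, r) \<in> E\<^sup>*"
  obtains f where "f \<in> rooted_trees r" and "\<And>v. v \<noteq> r \<Longrightarrow> (v, f v) \<in> E"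
proof -
  define d where "d v = (LEAST n. (v, r) \<in> E ^^ n)" for v
  have dist: "(v, r) \<in> E ^^ d v" for v
    unfolding d_def by (rule LeastI_ex) (use assms rtrancl_power in blast)
  have dist_le: "(v, r) \<in> E ^^ n \<Longrightarrow> d v \<le> n" for v n
    unfolding d_def by (rule Least_le)
  have dist_pos: "d v > 0" if "v \<noteq> r" for v
    using dist[of v] that by (cases "d v") auto
  have first_step: "\<exists>u. (v, u) \<in> E \<and> (u, r) \<in> E ^^ (d v - 1)" if "v \<noteq> r" for v
  proof -
    have "(v, r) \<in> E ^^ Suc (d v - 1)" using dist[of v] dist_pos[OF that] by simp
    then show ?thesis by (rule relpow_Suc_D2)
  qed
  define f where "f v = (if v = r then r else SOME u. (v, u) \<in> E \<and> (u, r) \<in> E ^^ (d v - 1))" for v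
  have f: "(v, f v) \<in> E \<and> (f v, r) \<in> E ^^ (d v - 1)" if "v \<noteq> r" for v
    using someI_ex[OF first_step[OF that]] that unfolding f_def by simp
  have "reaches f v r" for v
  proof (induction "d v" arbitrary: v rule: less_induct)
    case less
    show ?case
    proof (cases "v = r")
      case False
      have "d (f v) \<le> d v - 1" using dist_le f[OF False] by blast
      then have "d (f v) < d v" using dist_pos[OF False] by simp
      then have "reaches f (f v) r" by (rule less)
      then show ?thesis by (rule reaches_step)
    qed (simp add: reaches_refl)
  qed
  then have "f \<in> rooted_trees r" unfolding rooted_trees_def f_def by simp
  with f show ?thesis using that by blast
qed

lemma tree_weight_pos:
  assumes R: "rate_matrix R" and irr: "irreducible_chain R"
  shows "tree_weight R r > 0"
proof -
  have "\<And>v. (v, r) \<in> {(u, v). u \<noteq> v \<and> R u v > 0}\<^sup>*"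
    using irr unfolding irreducible_chain_def by blast
  then obtain f where f: "f \<in> rooted_trees r"
    and edges: "\<And>v. v \<noteq> r \<Longrightarrow> (v, f v) \<in> {(u, v). u \<noteq> v \<and> R u v > 0}"
    by (rule rooted_tree_within) auto
  have nonneg: "0 \<le> (\<Prod>v\<in>UNIV - {r}. R v (g v))" if g: "g \<in> rooted_trees r" for g
  proof (rule prod_nonneg)
    fix v assume "v \<in> UNIV - {r}"
    then have "v \<noteq> g v" using rooted_tree_no_fixpoint[OF g, of v] by auto
    then show "R v (g v) \<ge> 0" using R unfolding rate_matrix_def by blast
  qed
  have "0 < (\<Prod>v\<in>UNIV - {r}. R v (f v))" using edges by (intro prod_pos) auto
  also have "\<dots> \<le> tree_weight R r"
    unfolding tree_weight_def by (rule member_le_sum[OF f _ finite_rooted_trees]) (use nonneg in blast)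
  finally show ?thesis .
qed

lemma invariant_prob_tree_weight:
  assumes "rate_matrix R" and "irreducible_chain R"
  shows "invariant_prob R (\<lambda>x. tree_weight R x / (\<Sum>y\<in>UNIV. tree_weight R y))"
proof -
  define S where "S = (\<Sum>y\<in>UNIV. tree_weight R y)"
  have W: "tree_weight R x > 0" for x using tree_weight_pos[OF assms] .
  then have "S > 0" unfolding S_def by (intro sum_pos) auto
  have "(\<Sum>x\<in>UNIV - {y}. tree_weight R x / S * R x y) = tree_weight R y / S * (\<Sum>z\<in>UNIV - {y}. R y z)" for y
    using tree_weight_balance[of R y] by (simp add: sum_divide_distrib[symmetric])
  with W \<open>S > 0\<close> show ?thesis
    unfolding invariant_prob_def S_def[symmetric] by (simp add: less_imp_le sum_divide_distrib[symmetric] S_def)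
qed

lemma LIMSEQ_eq_from_1:
  fixes X Y :: "nat \<Rightarrow> 'b::topological_space"
  assumes "X \<longlonglongrightarrow> l" and "\<And>N. N \<ge> 1 \<Longrightarrow> X N = Y N"
  shows "Y \<longlonglongrightarrow> l"
  using assms(1) by (rule Lim_transform_eventually) (use assms(2) in \<open>auto simp: eventually_sequentially\<close>)

lemma convergent_eq_from_1:
  fixes X Y :: "nat \<Rightarrow> 'b::topological_space"
  assumes "convergent X" and "\<And>N. N \<ge> 1 \<Longrightarrow> X N = Y N"
  shows "convergent Y"
  using assms LIMSEQ_eq_from_1 unfolding convergent_def by blast

lemma ordered_family_cong:
  assumes "ordered_family I a" and "\<And>i N. i \<in> I \<Longrightarrow> N \<ge> 1 \<Longrightarrow> a i N = b i N"
  shows "ordered_family I b"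
  using assms(1) unfolding ordered_family_def
proof (intro conjI ballI allI impI; elim conjE)
  fix r s assume "r \<in> I" "s \<in> I" "r \<noteq> s"
    and "\<forall>r\<in>I. \<forall>s\<in>I. r \<noteq> s \<longrightarrow> convergent (\<lambda>N. arctan (a r N / a s N))"
  then show "convergent (\<lambda>N. arctan (b r N / b s N))"
    by (elim ballE impE convergent_eq_from_1) (auto simp: assms(2))
qed (auto simp: assms(2)[symmetric])

lemma ordered_family_divide:
  assumes "ordered_family I a" and "\<And>N. N \<ge> 1 \<Longrightarrow> c N > 0"
  shows "ordered_family I (\<lambda>i N. a i N / c N)"
  using assms unfolding ordered_family_def
proof (intro conjI ballI allI impI; elim conjE)
  fix r s assume "r \<in> I" "s \<in> I" "r \<noteq> s"
    and "\<forall>r\<in>I. \<forall>s\<in>I. r \<noteq> s \<longrightarrow> convergent (\<lambda>N. arctan (a r N / a s N))"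
  then show "convergent (\<lambda>N. arctan (a r N / c N / (a s N / c N)))"
    by (elim ballE impE convergent_eq_from_1) (auto simp: assms(2) less_imp_neq[symmetric])
qed auto

lemma arctan_divide_swap:
  fixes x y :: real
  assumes "x > 0" and "y > 0"
  shows "arctan (x / y) = pi / 2 - arctan (y / x)"
  using arctan_inverse[of "y / x"] assms by simp

lemma convergent_ratio_or_inverse:
  fixes A B :: "nat \<Rightarrow> real"
  assumes pos: "\<And>N. N \<ge> 1 \<Longrightarrow> A N > 0" "\<And>N. N \<ge> 1 \<Longrightarrow> B N > 0"
    and "convergent (\<lambda>N. arctan (A N / B N))"
  shows "convergent (\<lambda>N. A N / B N) \<or> convergent (\<lambda>N. B N / A N)"
proof -
  obtain L where L: "(\<lambda>N. arctan (A N / B N)) \<longlonglongrightarrow> L"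
    using assms(3) unfolding convergent_def by blast
  have "L \<ge> 0"
    by (rule LIMSEQ_le_const[OF L], rule exI[of _ 1]) (use pos in \<open>auto simp: less_imp_le\<close>)
  have "L \<le> pi / 2"
    by (rule LIMSEQ_le_const2[OF L]) (use arctan_ubound less_imp_le in blast)
  show ?thesis
  proof (cases "L < pi / 2")
    case True
    then have "cos L \<noteq> 0" using cos_gt_zero_pi[of L] \<open>L \<ge> 0\<close> by simp
    with L have "(\<lambda>N. tan (arctan (A N / B N))) \<longlonglongrightarrow> tan L"
      by (intro isCont_tendsto_compose[OF isCont_tan])
    then show ?thesis unfolding convergent_def tan_arctan by blast
  next
    case False
    with \<open>L \<le> pi / 2\<close> have "L = pi / 2" by simp
    have "(\<lambda>N. pi / 2 - arctan (A N / B N)) \<longlonglongrightarrow> pi / 2 - L"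
      by (intro tendsto_intros L)
    then have "(\<lambda>N. pi / 2 - arctan (A N / B N)) \<longlonglongrightarrow> 0"
      unfolding \<open>L = pi / 2\<close> by simp
    then have "(\<lambda>N. arctan (B N / A N)) \<longlonglongrightarrow> 0"
    proof (rule LIMSEQ_eq_from_1)
      fix N :: nat assume "N \<ge> 1"
      then show "pi / 2 - arctan (A N / B N) = arctan (B N / A N)"
        using arctan_divide_swap[of "B N" "A N"] pos by simp
    qed
    then have "(\<lambda>N. tan (arctan (B N / A N))) \<longlonglongrightarrow> tan 0"
      by (intro isCont_tendsto_compose[OF isCont_tan]) simp_all
    then show ?thesis unfolding convergent_def tan_arctan by blast
  qed
qed

lemma convergent_ratio_trans:
  fixes A B C :: "nat \<Rightarrow> real"
  assumes "\<And>N. N \<ge> 1 \<Longrightarrow> B N > 0"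
    and "convergent (\<lambda>N. A N / B N)" and "convergent (\<lambda>N. B N / C N)"
  shows "convergent (\<lambda>N. A N / C N)"
proof -
  obtain l l' where "(\<lambda>N. A N / B N) \<longlonglongrightarrow> l" and "(\<lambda>N. B N / C N) \<longlonglongrightarrow> l'"
    using assms(2,3) unfolding convergent_def by blast
  then have "(\<lambda>N. (A N / B N) * (B N / C N)) \<longlonglongrightarrow> l * l'"
    by (rule tendsto_mult)
  then have "convergent (\<lambda>N. (A N / B N) * (B N / C N))"
    unfolding convergent_def by blast
  then show ?thesis
    by (rule convergent_eq_from_1) (simp add: assms(1) less_imp_neq[symmetric])
qed

lemma finite_total_trans_has_greatest:
  assumes "finite S" and "S \<noteq> {}"
    and "\<And>a b. a \<in> S \<Longrightarrow> b \<in> S \<Longrightarrow> rel a b \<or> rel b a"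
    and "\<And>a b c. a \<in> S \<Longrightarrow> b \<in> S \<Longrightarrow> c \<in> S \<Longrightarrow> rel a b \<Longrightarrow> rel b c \<Longrightarrow> rel a c"
  shows "\<exists>m\<in>S. \<forall>k\<in>S. rel k m"
  using assms
proof (induction S rule: finite_ne_induct)
  case (insert x F)
  have "\<exists>m\<in>F. \<forall>k\<in>F. rel k m"
    by (rule insert.IH) (use insert.prems in blast)+
  then obtain m where m: "m \<in> F" "\<forall>k\<in>F. rel k m" by blast
  show ?case
  proof (cases "rel x m")
    case True
    then show ?thesis using m by blast
  next
    case False
    then have "rel m x" using insert.prems(1)[of x m] m by blast
    then have "\<forall>k\<in>insert x F. rel k x" using m insert.prems by blast
    then show ?thesis by blast
  qed
qed blast

lemma ordered_family_dominant:
  assumes "ordered_family K M" and "S \<subseteq> K" and "S \<noteq> {}"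
  obtains m where "m \<in> S" and "\<And>k. k \<in> S \<Longrightarrow> convergent (\<lambda>N. M k N / M m N)"
proof -
  have fin: "finite S" and pos: "\<And>k N. k \<in> S \<Longrightarrow> N \<ge> 1 \<Longrightarrow> M k N > 0"
    and arctan: "\<And>k k'. k \<in> S \<Longrightarrow> k' \<in> S \<Longrightarrow> k \<noteq> k' \<Longrightarrow> convergent (\<lambda>N. arctan (M k N / M k' N))"
    using assms(1,2) finite_subset unfolding ordered_family_def by blast+
  have "\<exists>m\<in>S. \<forall>k\<in>S. convergent (\<lambda>N. M k N / M m N)"
  proof (rule finite_total_trans_has_greatest[OF fin \<open>S \<noteq> {}\<close>])
    fix k k' assume k: "k \<in> S" and k': "k' \<in> S"
    show "convergent (\<lambda>N. M k N / M k' N) \<or> convergent (\<lambda>N. M k' N / M k N)"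
    proof (cases "k = k'")
      case True
      have "convergent (\<lambda>N. M k N / M k N)"
        by (rule convergent_eq_from_1[OF convergent_const]) (simp add: pos[OF k] less_imp_neq[symmetric])
      then show ?thesis using True by blast
    qed (use convergent_ratio_or_inverse pos arctan k k' in blast)
  next
    fix k k' k'' assume "k \<in> S" "k' \<in> S" "k'' \<in> S"
    then show "convergent (\<lambda>N. M k N / M k' N) \<Longrightarrow> convergent (\<lambda>N. M k' N / M k'' N)
        \<Longrightarrow> convergent (\<lambda>N. M k N / M k'' N)"
      using convergent_ratio_trans pos by blast
  qed
  then show ?thesis using that by blast
qed

lemma ordered_family_dominant_limits:
  assumes of: "ordered_family K M" and "S \<subseteq> K" and "S \<noteq> {}"
  obtains m L where "m \<in> S" and "L m = 1" and "\<And>k. k \<in> S \<Longrightarrow> L k \<ge> 0"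
    and "\<And>k. k \<in> S \<Longrightarrow> (\<lambda>N. M k N / M m N) \<longlonglongrightarrow> L k"
proof -
  have M_pos: "\<And>k N. k \<in> S \<Longrightarrow> N \<ge> 1 \<Longrightarrow> M k N > 0"
    using of \<open>S \<subseteq> K\<close> unfolding ordered_family_def by blast
  obtain m where "m \<in> S" and dom: "\<And>k. k \<in> S \<Longrightarrow> convergent (\<lambda>N. M k N / M m N)"
    using ordered_family_dominant[OF assms] by blast
  define L where "L k = lim (\<lambda>N. M k N / M m N)" for k
  have L: "(\<lambda>N. M k N / M m N) \<longlonglongrightarrow> L k" if "k \<in> S" for k
    using dom[OF that] unfolding L_def by (simp add: convergent_LIMSEQ_iff)
  have "L k \<ge> 0" if "k \<in> S" for k
  proof (rule LIMSEQ_le_const[OF L[OF that]], rule exI[of _ 1], intro allI impI)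
    fix N :: nat assume "N \<ge> 1"
    then show "0 \<le> M k N / M m N" using M_pos \<open>m \<in> S\<close> that by (simp add: less_imp_le)
  qed
  moreover have "(\<lambda>N. M m N / M m N) \<longlonglongrightarrow> 1"
    by (rule LIMSEQ_eq_from_1[OF tendsto_const])
      (use M_pos \<open>m \<in> S\<close> in \<open>simp add: less_imp_neq[symmetric]\<close>)
  then have "L m = 1" using L[OF \<open>m \<in> S\<close>] LIMSEQ_unique by blast
  ultimately show ?thesis using that \<open>m \<in> S\<close> L by blast
qed

lemma convergent_arctan_of_ratio_limits:
  fixes P Q D :: "nat \<Rightarrow> real"
  assumes p: "(\<lambda>N. P N / D N) \<longlonglongrightarrow> p" and q: "(\<lambda>N. Q N / D N) \<longlonglongrightarrow> q"
    and "p \<ge> 0" "q \<ge> 0" "p + q > 0"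
    and pos: "\<And>N. N \<ge> 1 \<Longrightarrow> P N > 0" "\<And>N. N \<ge> 1 \<Longrightarrow> Q N > 0" "\<And>N. N \<ge> 1 \<Longrightarrow> D N > 0"
  shows "convergent (\<lambda>N. arctan (P N / Q N))"
proof (cases "q > 0")
  case True
  have "(\<lambda>N. (P N / D N) / (Q N / D N)) \<longlonglongrightarrow> p / q"
    using p q True by (intro tendsto_divide) auto
  then have "(\<lambda>N. P N / Q N) \<longlonglongrightarrow> p / q"
    by (rule LIMSEQ_eq_from_1) (simp add: pos(3) less_imp_neq[symmetric])
  then have "(\<lambda>N. arctan (P N / Q N)) \<longlonglongrightarrow> arctan (p / q)" by (rule tendsto_arctan)
  then show ?thesis unfolding convergent_def by blast
next
  case False
  with assms(3-5) have "p > 0" "q = 0" by auto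
  have "(\<lambda>N. (Q N / D N) / (P N / D N)) \<longlonglongrightarrow> q / p"
    using p q \<open>p > 0\<close> by (intro tendsto_divide) auto
  then have "(\<lambda>N. pi / 2 - arctan ((Q N / D N) / (P N / D N))) \<longlonglongrightarrow> pi / 2 - arctan 0"
    unfolding \<open>q = 0\<close> by (intro tendsto_intros) simp
  then have "(\<lambda>N. arctan (P N / Q N)) \<longlonglongrightarrow> pi / 2 - arctan 0"
  proof (rule LIMSEQ_eq_from_1)
    fix N :: nat assume "N \<ge> 1"
    then show "pi / 2 - arctan ((Q N / D N) / (P N / D N)) = arctan (P N / Q N)"
      using arctan_divide_swap[of "P N" "Q N"] pos by (simp add: less_imp_neq[symmetric])
  qed
  then show ?thesis unfolding convergent_def by blast
qed

definition nonneg_combination :: "'k set \<Rightarrow> ('k \<Rightarrow> nat \<Rightarrow> real) \<Rightarrow> (nat \<Rightarrow> real) \<Rightarrow> bool" where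
  "nonneg_combination K M p \<longleftrightarrow>
     (\<exists>c. (\<forall>k. c k \<ge> 0) \<and> (\<forall>N\<ge>1. p N = (\<Sum>k\<in>K. c k * M k N)))"

lemma nonneg_combination_cong:
  "nonneg_combination K M p \<Longrightarrow> (\<And>N. N \<ge> 1 \<Longrightarrow> p N = q N) \<Longrightarrow> nonneg_combination K M q"
  unfolding nonneg_combination_def by simp

lemma nonneg_combination_zero: "nonneg_combination K M (\<lambda>N. 0)"
  unfolding nonneg_combination_def by (rule exI[of _ "\<lambda>_. 0"]) simp

lemma nonneg_combination_member:
  assumes "finite K" and "k \<in> K"
  shows "nonneg_combination K M (M k)"
  unfolding nonneg_combination_def
proof (intro exI[of _ "\<lambda>j. if j = k then 1 else 0"] conjI allI impI)
  fix N :: nat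
  have "(\<Sum>j\<in>K. (if j = k then 1 else 0) * M j N) = (\<Sum>j\<in>K. if j = k then M k N else 0)"
    by (rule sum.cong) auto
  then show "M k N = (\<Sum>j\<in>K. (if j = k then 1 else 0) * M j N)"
    using assms by simp
qed simp

lemma nonneg_combination_add:
  assumes "nonneg_combination K M p" and "nonneg_combination K M q"
  shows "nonneg_combination K M (\<lambda>N. p N + q N)"
proof -
  obtain a b where "\<forall>k. a k \<ge> 0" "\<forall>N\<ge>1. p N = (\<Sum>k\<in>K. a k * M k N)"
    and "\<forall>k. b k \<ge> 0" "\<forall>N\<ge>1. q N = (\<Sum>k\<in>K. b k * M k N)"
    using assms unfolding nonneg_combination_def by blast
  then show ?thesis unfolding nonneg_combination_def
    by (intro exI[of _ "\<lambda>k. a k + b k"]) (simp add: distrib_right sum.distrib add_nonneg_nonneg)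
qed

lemma nonneg_combination_sum:
  "finite A \<Longrightarrow> (\<And>x. x \<in> A \<Longrightarrow> nonneg_combination K M (f x))
    \<Longrightarrow> nonneg_combination K M (\<lambda>N. \<Sum>x\<in>A. f x N)"
  by (induction A rule: finite_induct) (simp_all add: nonneg_combination_zero nonneg_combination_add)

lemma convergent_arctan_nonneg_combinations:
  assumes of: "ordered_family K M"
    and "nonneg_combination K M P" and "nonneg_combination K M Q"
    and P_pos: "\<And>N. N \<ge> 1 \<Longrightarrow> P N > 0" and Q_pos: "\<And>N. N \<ge> 1 \<Longrightarrow> Q N > 0"
  shows "convergent (\<lambda>N. arctan (P N / Q N))"
proof -
  obtain a b where a: "\<And>k. a k \<ge> 0" "\<And>N. N \<ge> 1 \<Longrightarrow> P N = (\<Sum>k\<in>K. a k * M k N)"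
    and b: "\<And>k. b k \<ge> 0" "\<And>N. N \<ge> 1 \<Longrightarrow> Q N = (\<Sum>k\<in>K. b k * M k N)"
    using assms(2,3) unfolding nonneg_combination_def by blast
  have fin: "finite K" and M_pos: "\<And>k N. k \<in> K \<Longrightarrow> N \<ge> 1 \<Longrightarrow> M k N > 0"
    using of unfolding ordered_family_def by auto
  define S where "S = {k\<in>K. a k + b k > 0}"
  have "S \<subseteq> K" unfolding S_def by blast
  have outside_S: "a k = 0" "b k = 0" if "k \<in> K - S" for k
    using that a(1)[of k] b(1)[of k] unfolding S_def by auto
  have "S \<noteq> {}"
  proof
    assume "S = {}"
    then have "P 1 = 0" using a(2)[of 1] outside_S by simp
    then show False using P_pos[of 1] by simp
  qed
  with of \<open>S \<subseteq> K\<close> obtain m L where "m \<in> S" "L m = 1" and L_nonneg: "\<And>k. k \<in> S \<Longrightarrow> L k \<ge> 0"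
    and L: "\<And>k. k \<in> S \<Longrightarrow> (\<lambda>N. M k N / M m N) \<longlonglongrightarrow> L k"
    by (rule ordered_family_dominant_limits) blast
  have "m \<in> K" using \<open>m \<in> S\<close> \<open>S \<subseteq> K\<close> by blast
  have comb_limit: "(\<lambda>N. R N / M m N) \<longlonglongrightarrow> (\<Sum>k\<in>S. c k * L k)"
    if "\<And>N. N \<ge> 1 \<Longrightarrow> R N = (\<Sum>k\<in>K. c k * M k N)" and "\<And>k. k \<in> K - S \<Longrightarrow> c k = 0"
    for R c
  proof -
    have "(\<lambda>N. \<Sum>k\<in>S. c k * (M k N / M m N)) \<longlonglongrightarrow> (\<Sum>k\<in>S. c k * L k)"
      by (intro tendsto_sum tendsto_mult tendsto_const L)
    moreover have "R N = (\<Sum>k\<in>S. c k * M k N)" if "N \<ge> 1" for N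
      using that \<open>\<And>N. N \<ge> 1 \<Longrightarrow> R N = _\<close> \<open>\<And>k. k \<in> K - S \<Longrightarrow> c k = 0\<close>
      by (simp add: sum.mono_neutral_right[OF fin \<open>S \<subseteq> K\<close>])
    ultimately show ?thesis
      by (elim LIMSEQ_eq_from_1) (simp add: sum_divide_distrib)
  qed
  have "(a m + b m) * L m \<le> (\<Sum>k\<in>S. (a k + b k) * L k)"
    by (rule member_le_sum[OF \<open>m \<in> S\<close>]) (use a(1) b(1) L_nonneg fin \<open>S \<subseteq> K\<close> finite_subset in auto)
  moreover have "a m + b m > 0" using \<open>m \<in> S\<close> unfolding S_def by simp
  ultimately have "(\<Sum>k\<in>S. a k * L k) + (\<Sum>k\<in>S. b k * L k) > 0"
    using \<open>L m = 1\<close> by (simp add: sum.distrib distrib_right)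
  moreover have "(\<Sum>k\<in>S. a k * L k) \<ge> 0" "(\<Sum>k\<in>S. b k * L k) \<ge> 0"
    using a(1) b(1) L_nonneg by (auto intro!: sum_nonneg)
  ultimately show ?thesis
    using comb_limit[OF a(2) outside_S(1)] comb_limit[OF b(2) outside_S(2)] P_pos Q_pos M_pos \<open>m \<in> K\<close>
    by (intro convergent_arctan_of_ratio_limits[where D = "M m"]) auto
qed

lemma ordered_family_nonneg_combinations:
  assumes "ordered_family K M" and "finite I"
    and "\<And>i. i \<in> I \<Longrightarrow> nonneg_combination K M (P i)"
    and "\<And>i N. i \<in> I \<Longrightarrow> N \<ge> 1 \<Longrightarrow> P i N > 0"
  shows "ordered_family I P"
  unfolding ordered_family_def
  using assms convergent_arctan_nonneg_combinations[OF assms(1)] by blast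

definition exponents :: "('a \<times> 'a) set \<Rightarrow> nat \<Rightarrow> ('a \<times> 'a \<Rightarrow> nat) set" where
  "exponents J d = {k. (\<forall>e. e \<notin> J \<longrightarrow> k e = 0) \<and> (\<Sum>e\<in>J. k e) = d}"

definition rate_monomial ::
    "(nat \<Rightarrow> 'a \<Rightarrow> 'a \<Rightarrow> real) \<Rightarrow> ('a \<times> 'a) set \<Rightarrow> ('a \<times> 'a \<Rightarrow> nat) \<Rightarrow> nat \<Rightarrow> real" where
  "rate_monomial R J k N = (\<Prod>e\<in>J. R N (fst e) (snd e) ^ k e)"

lemma assumption_A_jumps:
  assumes "assumption_A R" and "N \<ge> 1" and "u \<noteq> v"
  shows "R N u v > 0 \<longleftrightarrow> (u, v) \<in> jumps R" and "(u, v) \<notin> jumps R \<Longrightarrow> R N u v = 0"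
proof -
  have "(\<forall>N\<ge>1. R N u v = 0) \<or> (\<forall>N\<ge>1. R N u v > 0)"
    using assms(1,3) unfolding assumption_A_def by blast
  moreover have "(u, v) \<in> jumps R \<longleftrightarrow> R 1 u v > 0" using assms(3) unfolding jumps_def by simp
  ultimately show "R N u v > 0 \<longleftrightarrow> (u, v) \<in> jumps R" and "(u, v) \<notin> jumps R \<Longrightarrow> R N u v = 0"
    using assms(2) by auto
qed

lemma assumption_A_ordered_monomials:
  assumes "assumption_A R" and "d \<ge> 1"
  shows "ordered_family (exponents (jumps R) d) (rate_monomial R (jumps R))"
  using assms unfolding assumption_A_def exponents_def rate_monomial_def[abs_def] by blast

lemma rate_product_monomial:
  fixes R :: "nat \<Rightarrow> 'a::finite \<Rightarrow> 'a \<Rightarrow> real"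
  assumes "finite J" and graph: "\<And>v. (v, g v) \<in> J"
  defines "k \<equiv> \<lambda>e. if g (fst e) = snd e then 1 else 0"
  shows "k \<in> exponents J CARD('a)" and "rate_monomial R J k N = (\<Prod>v\<in>UNIV. R N v (g v))"
proof -
  define G where "G = range (\<lambda>v. (v, g v))"
  have "G \<subseteq> J" unfolding G_def using graph by blast
  have G: "e \<in> G \<longleftrightarrow> g (fst e) = snd e" for e unfolding G_def by (cases e) auto
  have inj: "inj (\<lambda>v. (v, g v))" by (rule injI) simp
  have "(\<Sum>e\<in>J. k e) = card G"
    unfolding k_def using sum.mono_neutral_cong_right[OF \<open>finite J\<close> \<open>G \<subseteq> J\<close>, of k "\<lambda>_. 1"]
    by (simp add: G k_def)
  also have "\<dots> = CARD('a)" unfolding G_def by (simp add: card_image[OF inj])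
  finally show "k \<in> exponents J CARD('a)"
    unfolding exponents_def k_def using G \<open>G \<subseteq> J\<close> by auto
  have "rate_monomial R J k N = (\<Prod>e\<in>G. R N (fst e) (snd e))"
    unfolding rate_monomial_def
    by (rule prod.mono_neutral_cong_right[OF \<open>finite J\<close> \<open>G \<subseteq> J\<close>]) (auto simp: k_def G)
  also have "\<dots> = (\<Prod>v\<in>UNIV. R N v (g v))"
    unfolding G_def by (subst prod.reindex[OF inj]) simp
  finally show "rate_monomial R J k N = (\<Prod>v\<in>UNIV. R N v (g v))" .
qed

lemma nonneg_combination_rate_product:
  fixes R :: "nat \<Rightarrow> 'a::finite \<Rightarrow> 'a \<Rightarrow> real"
  assumes "finite J" and "finite (exponents J CARD('a))" and "\<And>v. g v \<noteq> v"
    and off_J: "\<And>N u v. N \<ge> 1 \<Longrightarrow> u \<noteq> v \<Longrightarrow> (u, v) \<notin> J \<Longrightarrow> R N u v = 0"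
  shows "nonneg_combination (exponents J CARD('a)) (rate_monomial R J) (\<lambda>N. \<Prod>v\<in>UNIV. R N v (g v))"
proof (cases "\<forall>v. (v, g v) \<in> J")
  case True
  note k = rate_product_monomial[OF \<open>finite J\<close>, of g, OF True[rule_format]]
  show ?thesis
    by (rule nonneg_combination_cong[OF nonneg_combination_member[OF assms(2) k(1)]]) (simp add: k(2))
next
  case False
  then obtain v where "(v, g v) \<notin> J" by blast
  then have "(\<Prod>v\<in>UNIV. R N v (g v)) = 0" if "N \<ge> 1" for N
    using off_J[OF that assms(3)[of v, symmetric]] by (intro prod_zero) auto
  then show ?thesis by (intro nonneg_combination_cong[OF nonneg_combination_zero]) simp
qed

lemma nonneg_combination_tree_flux:
  fixes R :: "nat \<Rightarrow> 'a::finite \<Rightarrow> 'a \<Rightarrow> real"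
  assumes "finite J" and "finite (exponents J CARD('a))" and "x \<noteq> y"
    and "\<And>N u v. N \<ge> 1 \<Longrightarrow> u \<noteq> v \<Longrightarrow> (u, v) \<notin> J \<Longrightarrow> R N u v = 0"
  shows "nonneg_combination (exponents J CARD('a)) (rate_monomial R J) (\<lambda>N. tree_weight (R N) x * R N x y)"
proof -
  have "nonneg_combination (exponents J CARD('a)) (rate_monomial R J)
      (\<lambda>N. \<Prod>v\<in>UNIV. R N v ((f(x := y)) v))" if f: "f \<in> rooted_trees x" for f
  proof (rule nonneg_combination_rate_product[OF assms(1,2) _ assms(4)])
    show "(f(x := y)) v \<noteq> v" for v
      using rooted_tree_no_fixpoint[OF f, of v] \<open>x \<noteq> y\<close> by (cases "v = x") auto
  qed
  then have "nonneg_combination (exponents J CARD('a)) (rate_monomial R J)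
      (\<lambda>N. \<Sum>f\<in>rooted_trees x. \<Prod>v\<in>UNIV. R N v ((f(x := y)) v))"
    by (rule nonneg_combination_sum[OF finite_rooted_trees])
  then show ?thesis by (simp add: tree_weight_mult)
qed

lemma ordered_family_tree_flux:
  fixes R :: "nat \<Rightarrow> 'a::finite \<Rightarrow> 'a \<Rightarrow> real"
  assumes rates: "\<And>N. N \<ge> 1 \<Longrightarrow> rate_matrix (R N)"
    and irred: "\<And>N. N \<ge> 1 \<Longrightarrow> irreducible_chain (R N)"
    and A: "assumption_A R"
  shows "ordered_family (sym_jumps R)
    (\<lambda>(x, y) N. tree_weight (R N) x * R N x y + tree_weight (R N) y * R N y x)"
proof (rule ordered_family_nonneg_combinations)
  show ordered: "ordered_family (exponents (jumps R) CARD('a)) (rate_monomial R (jumps R))"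
    by (rule assumption_A_ordered_monomials[OF A]) simp
  then have fin: "finite (exponents (jumps R) CARD('a))" unfolding ordered_family_def by blast
  show "finite (sym_jumps R)" by simp
  fix e assume e: "e \<in> sym_jumps R"
  obtain x y where xy: "e = (x, y)" "x \<noteq> y" using e unfolding sym_jumps_def by auto
  show "nonneg_combination (exponents (jumps R) CARD('a)) (rate_monomial R (jumps R))
      ((\<lambda>(x, y) N. tree_weight (R N) x * R N x y + tree_weight (R N) y * R N y x) e)"
    unfolding xy(1) using xy(2) assumption_A_jumps(2)[OF A]
    by (simp add: nonneg_combination_add nonneg_combination_tree_flux fin)
  fix N :: nat assume "N \<ge> 1"
  have "tree_weight (R N) x > 0" "tree_weight (R N) y > 0"
    using tree_weight_pos rates irred \<open>N \<ge> 1\<close> by blast+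
  moreover have "R N x y \<ge> 0" "R N y x \<ge> 0"
    using rates[OF \<open>N \<ge> 1\<close>] xy(2) unfolding rate_matrix_def by auto
  moreover have "R N x y > 0 \<or> R N y x > 0"
    using e xy assumption_A_jumps(1)[OF A \<open>N \<ge> 1\<close>] unfolding sym_jumps_def by auto
  ultimately show "0 < (\<lambda>(x, y) N. tree_weight (R N) x * R N x y + tree_weight (R N) y * R N y x) e N"
    unfolding xy(1) by (auto intro: add_pos_nonneg add_nonneg_pos)
qed

theorem corollary3p5:
  fixes R :: "nat \<Rightarrow> 'a::finite \<Rightarrow> 'a \<Rightarrow> real" and \<mu> :: "nat \<Rightarrow> 'a \<Rightarrow> real"
  assumes rates: "\<And>N. N \<ge> 1 \<Longrightarrow> rate_matrix (R N)"
    and irred: "\<And>N. N \<ge> 1 \<Longrightarrow> irreducible_chain (R N)"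
    and inv: "\<And>N. N \<ge> 1 \<Longrightarrow> invariant_prob (R N) (\<mu> N)"
    and uniq: "\<And>N \<nu>. N \<ge> 1 \<Longrightarrow> invariant_prob (R N) \<nu> \<Longrightarrow> \<nu> = \<mu> N"
    and A: "assumption_A R"
  shows "ordered_family (sym_jumps R) (\<lambda>(x, y) N. sym_cond R \<mu> N x y)"
proof -
  define S where "S N = (\<Sum>y\<in>UNIV. tree_weight (R N) y)" for N
  have \<mu>: "\<mu> N = (\<lambda>x. tree_weight (R N) x / S N)" if "N \<ge> 1" for N
    unfolding S_def using uniq invariant_prob_tree_weight rates irred that by metis
  have "S N > 0" if "N \<ge> 1" for N
    unfolding S_def using tree_weight_pos rates irred that by (intro sum_pos) auto
  then have "ordered_family (sym_jumps R)
      (\<lambda>e N. (\<lambda>(x, y) N. tree_weight (R N) x * R N x y + tree_weight (R N) y * R N y x) e N / (2 * S N))"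
    by (intro ordered_family_divide ordered_family_tree_flux rates irred A) auto
  then show ?thesis
    by (rule ordered_family_cong) (auto simp: sym_cond_def \<mu> add_divide_distrib)
qed

end
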